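(* For rational $\delta>0$ let $e(\delta)$ be the least integer $e$ with $2^{-e}<\delta$, and let $g(m,\delta)=(m-1)e(\delta)+\frac{(m-1)m}{2}$. Define $\bar g(x,k,0)=x+k+1$ and $\bar g(x,k,i+1)=g(\bar g(x,k,i),1/k)$. Then for each $i\in\mathbb{N}$: (i) $\bar g(x,k,i)\le (x+k+i+1)^{2^i}$ whenever $x\ge k>0$; (ii) for every $k\ge1$ and every nonempty finite $X\subseteq\mathbb{N}$, if $|X|>\bar g(\min X,k,i)$ then $X$ is $(\omega,k,i)$-persistent.
   Context: Strings are finite binary strings with $\preceq$ the initial-segment order; $2^i$ also denotes the set of strings of length $i$; a tree is a set of strings closed under initial segments; a leaf of a finite tree is a $\preceq$-maximal element. For finite $X=\{x_0<\dots<x_n\}$, a finite tree $T$ is $X$-quasistrong if $T\cap 2^{x_i}\ne\emptyset$ for all $i\le n$ and for each $i<n$ every $\sigma\in T\cap2^{x_i}$ has exactly two incompatible extensions in $T\cap 2^{x_{i+1}}$. $X$ is $\omega$-large if $|X|>\min X$. Persistence with $\alpha=\omega$: for $k\ge1$ and nonempty finite $X$, $X$ is $(\omega,k,0)$-persistent iff $X$ is $\omega$-large; for $i\ge1$, $X$ is $(\omega,k,i)$-persistent iff $X$ contains an $(\omega,k,i-1)$-persistent subset $Y$ such that for every $X$-quasistrong tree $T$ and every coloring $C:T\cap 2^{\max X}\to k$ there exist $c<k$ and a $Y$-quasistrong finite tree $S\subseteq T$ such that every leaf of $S$ has an extension in $C^{-1}(c)$. *)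

theory Defs
  imports Complex_Main "HOL-Library.Sublist"
begin

definition is_tree :: "bool list set \<Rightarrow> bool" where
  "is_tree T \<longleftrightarrow> (\<forall>\<sigma>\<in>T. \<forall>\<tau>. prefix \<tau> \<sigma> \<longrightarrow> \<tau> \<in> T)"

definition is_leaf :: "bool list set \<Rightarrow> bool list \<Rightarrow> bool" where
  "is_leaf S \<sigma> \<longleftrightarrow> \<sigma> \<in> S \<and> \<not> (\<exists>\<tau>\<in>S. strict_prefix \<sigma> \<tau>)"

definition consec :: "nat set \<Rightarrow> nat \<Rightarrow> nat \<Rightarrow> bool" where
  "consec X x y \<longleftrightarrow> x \<in> X \<and> y \<in> X \<and> x < y \<and> \<not> (\<exists>z\<in>X. x < z \<and> z < y)"

definition quasistrong :: "nat set \<Rightarrow> bool list set \<Rightarrow> bool" where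
  "quasistrong X T \<longleftrightarrow> finite T \<and> is_tree T \<and>
     (\<forall>x\<in>X. \<exists>\<sigma>\<in>T. length \<sigma> = x) \<and>
     (\<forall>x y. consec X x y \<longrightarrow>
        (\<forall>\<sigma>\<in>T. length \<sigma> = x \<longrightarrow>
           (\<exists>\<tau>1 \<tau>2. \<tau>1 \<noteq> \<tau>2 \<and>
              {\<tau>\<in>T. length \<tau> = y \<and> prefix \<sigma> \<tau>} = {\<tau>1, \<tau>2} \<and>
              \<not> prefix \<tau>1 \<tau>2 \<and> \<not> prefix \<tau>2 \<tau>1)))"

definition omega_large :: "nat set \<Rightarrow> bool" where
  "omega_large X \<longleftrightarrow> card X > Min X"

fun persistent :: "nat \<Rightarrow> nat \<Rightarrow> nat set \<Rightarrow> bool" where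
  "persistent k 0 X \<longleftrightarrow> finite X \<and> X \<noteq> {} \<and> omega_large X"
| "persistent k (Suc i) X \<longleftrightarrow> finite X \<and> X \<noteq> {} \<and>
     (\<exists>Y. Y \<subseteq> X \<and> persistent k i Y \<and>
        (\<forall>T C. quasistrong X T \<longrightarrow>
           (\<forall>\<sigma>\<in>T. length \<sigma> = Max X \<longrightarrow> C \<sigma> < k) \<longrightarrow>
           (\<exists>c<k. \<exists>S. S \<subseteq> T \<and> quasistrong Y S \<and>
              (\<forall>\<sigma>. is_leaf S \<sigma> \<longrightarrow>
                 (\<exists>\<tau>\<in>T. length \<tau> = Max X \<and> prefix \<sigma> \<tau> \<and> C \<tau> = c)))))"

definition eexp :: "rat \<Rightarrow> int" where
  "eexp \<delta> = (LEAST e::int. power_int (2::rat) (- e) < \<delta>)"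

definition gfun :: "int \<Rightarrow> rat \<Rightarrow> int" where
  "gfun m \<delta> = (m - 1) * eexp \<delta> + ((m - 1) * m) div 2"

fun gbar :: "nat \<Rightarrow> nat \<Rightarrow> nat \<Rightarrow> int" where
  "gbar x k 0 = int x + int k + 1"
| "gbar x k (Suc i) = gfun (gbar x k i) (1 / of_nat k)"

end

theory Submission
  imports Defs "HOL-Library.Log_Nat"
begin

text \<open>
  Part (i): for \<open>k > 0\<close> the exponent \<open>e(1/k)\<close> is \<open>e = floorlog 2 k \<le> k\<close>, and
  \<open>g(j + 1, 1/k) = j e + j (j + 1) / 2 = (e + 1) + \<dots> + (e + j)\<close>. This is at most \<open>B^2\<close>
  whenever \<open>j < B\<close> and \<open>2 e \<le> B\<close>, so induction on \<open>i\<close> with \<open>B = (x + k + i + 2)^(2^i)\<close> gives the bound.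

  Part (ii) is proved by induction on \<open>i\<close> under the weaker hypothesis
  \<open>gbar (Min X) k i \<le> card X + 1\<close>, which is what the induction step produces. Let
  \<open>x_0 < \<dots> < x_n\<close> enumerate \<open>X\<close> and colour the \<open>2^n\<close> leaves of an \<open>X\<close>-quasistrong tree with
  \<open>k\<close> colours; some colour \<open>c\<close> has density at least \<open>1/k > 2^-e\<close> among them. Call a node on
  level \<open>x_a\<close> dense with parameter \<open>s\<close> if more than a \<open>2^-s\<close> fraction of the leaves above it
  have colour \<open>c\<close>. Averaging over its \<open>2^(s+1)\<close> descendants on level \<open>x_(a+s+1)\<close> shows that
  two of them are dense with parameter \<open>s + 1\<close>. Recursing from the root with \<open>s = e\<close> and gluing
  the two subtrees below the node gives a tree all of whose leaves see colour \<open>c\<close> and which is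
  quasistrong for \<open>Y = {x_a | a = 0, e + 1, (e + 1) + (e + 2), \<dots>}\<close>. With \<open>m = gbar (Min X) k i\<close>,
  \<open>m - 1\<close> such levels fit into \<open>X\<close> as soon as \<open>g(m, 1/k) \<le> card X + 1\<close>; then
  \<open>Min Y = Min X\<close> and \<open>card Y + 1 = m\<close>, so \<open>Y\<close> is persistent by induction.
\<close>

lemma prefix_length_eq: "prefix xs ys \<Longrightarrow> length xs = length ys \<Longrightarrow> xs = ys"
  by (metis append_Nil2 append_eq_conv_conj prefix_def)

lemma prefixes_same_length_eq:
  "prefix xs zs \<Longrightarrow> prefix ys zs \<Longrightarrow> length xs = length ys \<Longrightarrow> xs = ys"
  by (metis prefix_length_eq prefix_length_prefix order_refl)

lemma not_parallel_prefix: "\<not> xs \<parallel> ys \<Longrightarrow> length xs \<le> length ys \<Longrightarrow> prefix xs ys"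
  by (metis parallel_def prefix_length_eq prefix_length_le order_antisym)

lemma not_parallel_same_length_eq: "\<not> xs \<parallel> ys \<Longrightarrow> length xs = length ys \<Longrightarrow> xs = ys"
  by (metis not_parallel_prefix prefix_length_eq order_refl)

lemma not_parallel_extension_eq:
  "\<not> zs \<parallel> ys \<Longrightarrow> prefix xs zs \<Longrightarrow> length ys = length xs \<Longrightarrow> ys = xs"
  by (metis not_parallel_prefix parallel_commute prefix_length_le prefixes_same_length_eq)

lemma not_parallel_prefix_trans: "\<not> zs \<parallel> ys \<Longrightarrow> prefix xs ys \<Longrightarrow> \<not> zs \<parallel> xs"
  by (metis parallel_def prefix_order.order_trans prefix_same_cases)

lemma parallel_if_same_length: "xs \<noteq> ys \<Longrightarrow> length xs = length ys \<Longrightarrow> xs \<parallel> ys"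
  by (metis parallelI prefix_length_eq)

definition extensions :: "bool list set \<Rightarrow> bool list \<Rightarrow> nat \<Rightarrow> bool list set" where
  "extensions S \<sigma> l = {\<tau>\<in>S. length \<tau> = l \<and> prefix \<sigma> \<tau>}"

definition splits_in_two :: "bool list set \<Rightarrow> bool list \<Rightarrow> nat \<Rightarrow> bool" where
  "splits_in_two S \<sigma> l \<longleftrightarrow> (\<exists>\<tau>1 \<tau>2. \<tau>1 \<parallel> \<tau>2 \<and> extensions S \<sigma> l = {\<tau>1, \<tau>2})"

lemma quasistrong_iff:
  "quasistrong X T \<longleftrightarrow> finite T \<and> is_tree T \<and> (\<forall>x\<in>X. \<exists>\<sigma>\<in>T. length \<sigma> = x) \<and>
     (\<forall>x y. consec X x y \<longrightarrow> (\<forall>\<sigma>\<in>T. length \<sigma> = x \<longrightarrow> splits_in_two T \<sigma> y))"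
proof -
  have "(\<tau>1 \<noteq> \<tau>2 \<and> E = {\<tau>1, \<tau>2} \<and> \<not> prefix \<tau>1 \<tau>2 \<and> \<not> prefix \<tau>2 \<tau>1) \<longleftrightarrow> \<tau>1 \<parallel> \<tau>2 \<and> E = {\<tau>1, \<tau>2}"
    for E and \<tau>1 \<tau>2 :: "bool list"
    by (auto simp: parallel_def)
  thus ?thesis
    unfolding quasistrong_def splits_in_two_def extensions_def by presburger
qed

lemma finite_extensions: "finite S \<Longrightarrow> finite (extensions S \<sigma> l)"
  by (simp add: extensions_def)

lemma extensions_split:
  assumes "is_tree T" "S \<subseteq> T" "length \<sigma> \<le> l" "l \<le> l'"
  shows "extensions S \<sigma> l' = (\<Union>\<rho>\<in>extensions T \<sigma> l. extensions S \<rho> l')"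
proof (intro equalityI subsetI)
  fix \<tau> assume \<tau>: "\<tau> \<in> extensions S \<sigma> l'"
  have "take l \<tau> \<in> T"
    using \<tau> assms(1,2) take_is_prefix unfolding extensions_def is_tree_def by blast
  moreover have "prefix \<sigma> (take l \<tau>)"
    using \<tau> assms(3) by (auto simp: extensions_def prefix_def)
  ultimately have "take l \<tau> \<in> extensions T \<sigma> l"
    using \<tau> assms(4) by (auto simp: extensions_def)
  moreover have "\<tau> \<in> extensions S (take l \<tau>) l'"
    using \<tau> by (auto simp: extensions_def intro: take_is_prefix)
  ultimately show "\<tau> \<in> (\<Union>\<rho>\<in>extensions T \<sigma> l. extensions S \<rho> l')"
    by blast
qed (auto simp: extensions_def intro: prefix_order.order_trans)

lemma card_extensions_split:
  assumes "finite T" "is_tree T" "S \<subseteq> T" "length \<sigma> \<le> l" "l \<le> l'"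
  shows "card (extensions S \<sigma> l') = (\<Sum>\<rho>\<in>extensions T \<sigma> l. card (extensions S \<rho> l'))"
  unfolding extensions_split[OF assms(2-5)]
proof (rule card_UN_disjoint)
  show "\<forall>\<rho>\<in>extensions T \<sigma> l. \<forall>\<rho>'\<in>extensions T \<sigma> l. \<rho> \<noteq> \<rho>' \<longrightarrow>
      extensions S \<rho> l' \<inter> extensions S \<rho>' l' = {}"
    by (auto simp: extensions_def dest: prefixes_same_length_eq)
qed (use finite_extensions[OF assms(1)] finite_extensions[OF finite_subset[OF assms(3,1)]] in auto)

section \<open>Gluing quasistrong trees\<close>

lemma quasistrong_prefixes: "quasistrong {length \<sigma>} (set (prefixes \<sigma>))"
  unfolding quasistrong_def is_tree_def consec_def by (auto intro: prefix_order.order_trans)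

lemma is_leaf_prefixes: "is_leaf (set (prefixes \<sigma>)) \<rho> \<Longrightarrow> \<rho> = \<sigma>"
  unfolding is_leaf_def strict_prefix_def by auto

lemma is_leaf_subset: "is_leaf A \<rho> \<Longrightarrow> \<rho> \<in> B \<Longrightarrow> B \<subseteq> A \<Longrightarrow> is_leaf B \<rho>"
  unfolding is_leaf_def by blast

lemma consec_insert_below:
  assumes "y0 \<in> Y" "\<forall>y\<in>Y. y0 \<le> y" "x0 < y0" "consec (insert x0 Y) x y"
  shows "(x = x0 \<and> y = y0) \<or> consec Y x y"
  using assms unfolding consec_def by (metis insert_iff leD order_le_less order_less_trans)

lemma extensions_Un_branch:
  assumes "\<forall>\<tau>\<in>S2. \<not> \<tau> \<parallel> \<rho>2" "length \<rho>2 = length \<rho>1" "\<rho>1 \<noteq> \<rho>2" "prefix \<rho>1 s"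
  shows "extensions (S1 \<union> S2) s l = extensions S1 s l"
  using assms by (auto simp: extensions_def dest: not_parallel_extension_eq prefix_order.order_trans)

lemma quasistrong_Un_branches:
  assumes "quasistrong Y S1" "quasistrong Y S2" "\<forall>\<tau>\<in>S1. \<not> \<tau> \<parallel> \<rho>1" "\<forall>\<tau>\<in>S2. \<not> \<tau> \<parallel> \<rho>2"
    "length \<rho>2 = length \<rho>1" "\<rho>1 \<noteq> \<rho>2" "\<forall>y\<in>Y. length \<rho>1 \<le> y"
  shows "quasistrong Y (S1 \<union> S2)"
proof -
  have "splits_in_two (S1 \<union> S2) s y" if "consec Y (length s) y" "s \<in> S1 \<union> S2" for y s
  proof -
    have "length \<rho>1 \<le> length s"
      using that(1) assms(7) by (auto simp: consec_def)
    show ?thesis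
    proof (cases "s \<in> S1")
      case True
      hence "prefix \<rho>1 s"
        using assms(3) \<open>length \<rho>1 \<le> length s\<close> by (metis not_parallel_prefix parallel_commute)
      hence "extensions (S1 \<union> S2) s y = extensions S1 s y"
        using assms(4-6) by (intro extensions_Un_branch)
      thus ?thesis
        using assms(1) that(1) True by (simp add: quasistrong_iff splits_in_two_def)
    next
      case False
      hence "s \<in> S2"
        using that(2) by blast
      hence "prefix \<rho>2 s"
        using assms(4,5) \<open>length \<rho>1 \<le> length s\<close> by (metis not_parallel_prefix parallel_commute)
      hence "extensions (S2 \<union> S1) s y = extensions S2 s y"
        using assms(3,5,6) by (intro extensions_Un_branch) auto
      thus ?thesis
        using assms(2) that(1) \<open>s \<in> S2\<close> by (simp add: quasistrong_iff splits_in_two_def Un_commute)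
    qed
  qed
  thus ?thesis
    using assms(1,2) by (auto simp: quasistrong_iff is_tree_def)
qed

lemma quasistrong_insert_root:
  assumes "quasistrong Y S" "y0 \<in> Y" "\<forall>y\<in>Y. y0 \<le> y" "length \<sigma> < y0"
    "\<forall>\<tau>\<in>S. \<not> \<tau> \<parallel> \<sigma>" "{\<tau>\<in>S. length \<tau> = y0} = {\<rho>1, \<rho>2}" "\<rho>1 \<noteq> \<rho>2"
  shows "quasistrong (insert (length \<sigma>) Y) (set (prefixes \<sigma>) \<union> S)"
proof -
  let ?S = "set (prefixes \<sigma>) \<union> S"
  have short: "length \<tau> \<le> length \<sigma>" if "\<tau> \<in> set (prefixes \<sigma>)" for \<tau>
    using that prefix_length_le by simp
  have root_splits: "splits_in_two ?S \<sigma> y0"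
  proof -
    have "\<rho>1 \<in> S" "\<rho>2 \<in> S" "length \<rho>1 = y0" "length \<rho>2 = y0"
      using assms(6) by blast+
    hence "prefix \<sigma> \<rho>1" "prefix \<sigma> \<rho>2"
      using assms(4,5) by (metis less_imp_le not_parallel_prefix parallel_commute)+
    hence "extensions ?S \<sigma> y0 = {\<rho>1, \<rho>2}"
      using assms(4,6) short by (fastforce simp: extensions_def)
    moreover have "\<rho>1 \<parallel> \<rho>2"
      using assms(7) \<open>length \<rho>1 = y0\<close> \<open>length \<rho>2 = y0\<close> by (metis parallel_if_same_length)
    ultimately show ?thesis
      unfolding splits_in_two_def by blast
  qed
  have "splits_in_two ?S s y" if "consec (insert (length \<sigma>) Y) (length s) y" "s \<in> ?S" for y s
    using consec_insert_below[OF assms(2-4) that(1)]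
  proof
    assume "length s = length \<sigma> \<and> y = y0"
    moreover have "s = \<sigma>"
      using that(2) calculation assms(5) by (auto dest: prefix_length_eq not_parallel_same_length_eq)
    ultimately show ?thesis
      using root_splits by simp
  next
    assume "consec Y (length s) y"
    hence "y0 \<le> length s" "length s < y"
      using assms(3) by (auto simp: consec_def)
    hence "s \<in> S" "extensions ?S s y = extensions S s y"
      using that(2) assms(4) short by (fastforce simp: extensions_def)+
    thus ?thesis
      using assms(1) \<open>consec Y (length s) y\<close> by (simp add: quasistrong_iff splits_in_two_def)
  qed
  thus ?thesis
    using assms(1) unfolding quasistrong_iff is_tree_def
    by (auto intro: prefix_order.order_trans)
qed

lemma not_parallel_glued:
  assumes "\<forall>\<tau>\<in>S1. \<not> \<tau> \<parallel> \<rho>1" "\<forall>\<tau>\<in>S2. \<not> \<tau> \<parallel> \<rho>2" "prefix \<sigma> \<rho>1" "prefix \<sigma> \<rho>2"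
    "\<tau> \<in> set (prefixes \<sigma>) \<union> (S1 \<union> S2)"
  shows "\<not> \<tau> \<parallel> \<sigma>"
proof -
  consider "prefix \<tau> \<sigma>" | "\<tau> \<in> S1" | "\<tau> \<in> S2"
    using assms(5) by auto
  thus ?thesis
  proof cases
    case 1
    thus ?thesis by (simp add: parallel_def)
  qed (use assms(1-4) not_parallel_prefix_trans in blast)+
qed

lemma quasistrong_glue:
  assumes "quasistrong Y S1" "quasistrong Y S2" "\<rho>1 \<in> S1" "\<rho>2 \<in> S2"
    "\<forall>\<tau>\<in>S1. \<not> \<tau> \<parallel> \<rho>1" "\<forall>\<tau>\<in>S2. \<not> \<tau> \<parallel> \<rho>2"
    "length \<rho>1 \<in> Y" "\<forall>y\<in>Y. length \<rho>1 \<le> y" "length \<rho>2 = length \<rho>1" "\<rho>1 \<noteq> \<rho>2"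
    "prefix \<sigma> \<rho>1" "prefix \<sigma> \<rho>2" "length \<sigma> < length \<rho>1"
  shows "quasistrong (insert (length \<sigma>) Y) (set (prefixes \<sigma>) \<union> (S1 \<union> S2))"
proof (rule quasistrong_insert_root)
  show "quasistrong Y (S1 \<union> S2)"
    by (rule quasistrong_Un_branches) (use assms in auto)
  show "\<forall>\<tau>\<in>S1 \<union> S2. \<not> \<tau> \<parallel> \<sigma>"
    using not_parallel_glued[OF assms(5,6,11,12)] by blast
  have "\<tau> = \<rho>1" if "\<tau> \<in> S1" "length \<tau> = length \<rho>1" for \<tau>
    using that assms(5) not_parallel_same_length_eq by blast
  moreover have "\<tau> = \<rho>2" if "\<tau> \<in> S2" "length \<tau> = length \<rho>1" for \<tau>
    using not_parallel_same_length_eq[of \<tau> \<rho>2] that assms(6,9) by simp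
  ultimately show "{\<tau>\<in>S1 \<union> S2. length \<tau> = length \<rho>1} = {\<rho>1, \<rho>2}"
    using assms(3,4,9) by blast
qed (use assms in auto)

lemma is_leaf_glued:
  assumes "is_leaf (set (prefixes \<sigma>) \<union> (S1 \<union> S2)) \<rho>" "\<rho>1 \<in> S1" "strict_prefix \<sigma> \<rho>1"
  shows "is_leaf S1 \<rho> \<or> is_leaf S2 \<rho>"
proof -
  have "\<not> prefix \<rho> \<sigma>"
    using assms prefix_order.le_less_trans unfolding is_leaf_def by blast
  thus ?thesis
    using assms(1) is_leaf_subset[OF assms(1)] unfolding is_leaf_def by auto
qed

lemma two_heavy_elements:
  fixes f :: "'a \<Rightarrow> nat"
  assumes "finite B" "\<forall>x\<in>B. f x \<le> M" "2 * M < sum f B"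
  shows "\<exists>x\<in>B. \<exists>y\<in>B. x \<noteq> y \<and> M < f x * card B \<and> M < f y * card B"
proof (rule ccontr)
  assume no_two: "\<not> ?thesis"
  define G where "G = {x\<in>B. M < f x * card B}"
  have "finite G" "G \<subseteq> B"
    using assms(1) by (auto simp: G_def)
  have "card G \<le> 1"
    using no_two card_le_Suc0_iff_eq[OF \<open>finite G\<close>] by (auto simp: G_def)
  have "sum f G \<le> card G * M"
    using sum_bounded_above[of G f M] assms(2) \<open>G \<subseteq> B\<close> by auto
  also have "\<dots> \<le> M"
    using mult_le_mono1[OF \<open>card G \<le> 1\<close>, of M] by simp
  finally have sum_G: "sum f G \<le> M" .
  have "0 < card B"
    using assms(1,3) card_gt_0_iff by fastforce
  have "sum f (B - G) * card B = (\<Sum>x\<in>B - G. f x * card B)"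
    by (simp add: sum_distrib_right)
  also have "\<dots> \<le> card (B - G) * M"
    using sum_bounded_above[of "B - G" "\<lambda>x. f x * card B" M] by (auto simp: G_def not_less)
  also have "\<dots> \<le> M * card B"
    using card_mono[OF assms(1), of "B - G"] by simp
  finally have sum_B_minus_G: "sum f (B - G) \<le> M"
    using \<open>0 < card B\<close> by simp
  have "sum f B = sum f G + sum f (B - G)"
    using sum.subset_diff[OF \<open>G \<subseteq> B\<close> assms(1), of f] by simp
  thus False
    using sum_G sum_B_minus_G assms(3) by linarith
qed

lemma popular_value:
  assumes "finite A" "\<forall>x\<in>A. f x < k" "0 < k"
  shows "\<exists>c<k. card A \<le> k * card {x\<in>A. f x = c}"
proof (rule ccontr)
  assume "\<not> ?thesis"
  hence small: "k * card {x\<in>A. f x = c} < card A" if "c < k" for c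
    using that by (simp add: not_le)
  have "(\<Union>c<k. {x\<in>A. f x = c}) = A"
    using assms(2) by auto
  moreover have "card (\<Union>c<k. {x\<in>A. f x = c}) = (\<Sum>c<k. card {x\<in>A. f x = c})"
    using assms(1) by (intro card_UN_disjoint) auto
  ultimately have "card A = (\<Sum>c<k. card {x\<in>A. f x = c})"
    by simp
  hence "k * card A = (\<Sum>c<k. k * card {x\<in>A. f x = c})"
    by (simp add: sum_distrib_left)
  also have "\<dots> < (\<Sum>c<k. card A)"
    using small assms(3) by (intro sum_strict_mono) auto
  finally show False
    by simp
qed

section \<open>Sparse index sets\<close>

fun sparse_span :: "nat \<Rightarrow> nat \<Rightarrow> nat" where
  "sparse_span s 0 = 0"
| "sparse_span s (Suc m) = Suc s + sparse_span (Suc s) m"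

text \<open>The indices \<open>a, a + (s+1), a + (s+1) + (s+2), \<dots>\<close>: a node whose leaves have density
  more than \<open>2^-s\<close> has two descendants \<open>s + 1\<close> levels higher whose leaves have density
  more than \<open>2^-(s+1)\<close>, so the gaps must grow by one at each step.\<close>

fun sparse_indices :: "nat \<Rightarrow> nat \<Rightarrow> nat \<Rightarrow> nat set" where
  "sparse_indices a s 0 = {a}"
| "sparse_indices a s (Suc m) = insert a (sparse_indices (a + Suc s) (Suc s) m)"

lemma sparse_indices_subset: "sparse_indices a s m \<subseteq> {a..a + sparse_span s m}"
  by (induction m arbitrary: a s) fastforce+

lemma start_in_sparse_indices: "a \<in> sparse_indices a s m"
  by (cases m) auto

lemma finite_sparse_indices: "finite (sparse_indices a s m)"
  by (rule finite_subset[OF sparse_indices_subset]) simp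

lemma card_sparse_indices: "card (sparse_indices a s m) = Suc m"
proof (induction m arbitrary: a s)
  case (Suc m)
  have "a \<notin> sparse_indices (a + Suc s) (Suc s) m"
    using sparse_indices_subset[of "a + Suc s" "Suc s" m] by auto
  thus ?case
    using Suc.IH finite_sparse_indices by simp
qed simp

lemma sparse_span_Suc: "sparse_span s (Suc m) = sparse_span s m + s + Suc m"
  by (induction m arbitrary: s) auto

lemma sparse_span_mono: "m \<le> m' \<Longrightarrow> sparse_span s m \<le> sparse_span s m'"
  by (rule lift_Suc_mono_le[of "sparse_span s"]) (simp add: sparse_span_Suc del: sparse_span.simps(2))

lemma double_sparse_span: "2 * sparse_span s m = m * (2 * s + m + 1)"
  by (induction m) (simp_all add: sparse_span_Suc algebra_simps del: sparse_span.simps(2))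

lemma sparse_span_le_square: "2 * s \<le> Suc m \<Longrightarrow> sparse_span s m \<le> (Suc m)\<^sup>2"
proof -
  assume "2 * s \<le> Suc m"
  hence "2 * sparse_span s m \<le> m * (2 * Suc m)"
    unfolding double_sparse_span by (intro mult_le_mono2) simp
  also have "\<dots> \<le> 2 * (Suc m)\<^sup>2"
    by (simp add: power2_eq_square)
  finally show ?thesis
    by simp
qed

locale finite_levels =
  fixes X :: "nat set"
  assumes finite_X: "finite X" and X_nonempty: "X \<noteq> {}"
begin

definition lvl :: "nat \<Rightarrow> nat" where
  "lvl i = sorted_list_of_set X ! i"

abbreviation height :: nat where
  "height \<equiv> card X - 1"

lemma card_X_pos: "0 < card X"
  using finite_X X_nonempty by (simp add: card_gt_0_iff)

lemma strict_mono_lvl: "strict_mono_on {..height} lvl"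
proof (rule strict_mono_onI)
  fix i j assume "j \<in> {..height}" "i < j"
  thus "lvl i < lvl j"
    unfolding lvl_def using card_X_pos
    by (intro sorted_wrt_nth_less[OF strict_sorted_list_of_set]) auto
qed

lemma lvl_less_iff: "i \<le> height \<Longrightarrow> j \<le> height \<Longrightarrow> lvl i < lvl j \<longleftrightarrow> i < j"
  using strict_mono_on_less[OF strict_mono_lvl] by simp

lemma lvl_le_iff: "i \<le> height \<Longrightarrow> j \<le> height \<Longrightarrow> lvl i \<le> lvl j \<longleftrightarrow> i \<le> j"
  using strict_mono_on_less_eq[OF strict_mono_lvl] by simp

lemma lvl_image: "lvl ` {..height} = X"
proof -
  have "lvl ` {..height} = set (sorted_list_of_set X)"
    unfolding lvl_def set_conv_nth using card_X_pos by (auto simp: le_diff_conv2 Suc_le_eq)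
  thus ?thesis using finite_X by simp
qed

lemma lvl_in: "i \<le> height \<Longrightarrow> lvl i \<in> X"
  using lvl_image by blast

lemma X_lvlE:
  assumes "x \<in> X"
  obtains i where "i \<le> height" "x = lvl i"
  using assms lvl_image by blast

lemma Min_eq_lvl: "Min X = lvl 0"
  using finite_X by (auto intro!: Min_eqI lvl_in elim!: X_lvlE simp: lvl_le_iff)

lemma Max_eq_lvl: "Max X = lvl height"
  using finite_X by (auto intro!: Max_eqI lvl_in elim!: X_lvlE simp: lvl_le_iff)

lemma consec_lvl: "a < height \<Longrightarrow> consec X (lvl a) (lvl (Suc a))"
  unfolding consec_def by (auto simp: lvl_in lvl_less_iff elim!: X_lvlE)

lemma sparse_levels_ge:
  "a + sparse_span s m \<le> height \<Longrightarrow> y \<in> lvl ` sparse_indices a s m \<Longrightarrow> lvl a \<le> y"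
  using sparse_indices_subset by (fastforce simp: lvl_le_iff)

lemma sparse_levels_subset: "a + sparse_span s m \<le> height \<Longrightarrow> lvl ` sparse_indices a s m \<subseteq> X"
  using sparse_indices_subset by (fastforce intro: lvl_in)

lemma card_sparse_levels: "a + sparse_span s m \<le> height \<Longrightarrow> card (lvl ` sparse_indices a s m) = Suc m"
proof -
  assume "a + sparse_span s m \<le> height"
  hence "sparse_indices a s m \<subseteq> {..height}"
    using sparse_indices_subset by fastforce
  hence "inj_on lvl (sparse_indices a s m)"
    using strict_mono_on_imp_inj_on[OF strict_mono_lvl] inj_on_subset by blast
  thus ?thesis
    by (simp add: card_image card_sparse_indices)
qed

end

section \<open>Dense nodes of a quasistrong tree\<close>

locale quasistrong_tree = finite_levels +
  fixes T :: "bool list set"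
  assumes quasistrong_T: "quasistrong X T"
begin

lemma finite_T: "finite T" and tree_T: "is_tree T"
  using quasistrong_T by (auto simp: quasistrong_def)

lemma card_extensions_Suc:
  assumes "\<sigma> \<in> T" "length \<sigma> = lvl a" "a < height"
  shows "card (extensions T \<sigma> (lvl (Suc a))) = 2"
proof -
  have "splits_in_two T \<sigma> (lvl (Suc a))"
    using quasistrong_T consec_lvl[OF assms(3)] assms(1,2) by (simp add: quasistrong_iff)
  thus ?thesis
    unfolding splits_in_two_def by (auto simp: parallel_def)
qed

lemma card_extensions_lvl:
  assumes "\<sigma> \<in> T" "length \<sigma> = lvl a" "a + d \<le> height"
  shows "card (extensions T \<sigma> (lvl (a + d))) = 2 ^ d"
  using assms(3)
proof (induction d)
  case 0
  have "extensions T \<sigma> (lvl a) = {\<sigma>}"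
    using assms(1,2) by (auto simp: extensions_def dest: prefix_length_eq)
  thus ?case
    by simp
next
  case (Suc d)
  have "card (extensions T \<sigma> (lvl (a + Suc d))) =
      (\<Sum>\<rho>\<in>extensions T \<sigma> (lvl (a + d)). card (extensions T \<rho> (lvl (Suc (a + d)))))"
    using card_extensions_split[OF finite_T tree_T] assms(2) Suc.prems by (simp add: lvl_le_iff)
  also have "\<dots> = (\<Sum>\<rho>\<in>extensions T \<sigma> (lvl (a + d)). 2)"
    using card_extensions_Suc Suc.prems by (intro sum.cong) (auto simp: extensions_def)
  also have "\<dots> = 2 ^ Suc d"
    using Suc by simp
  finally show ?case .
qed

lemma card_extensions_le:
  assumes "S \<subseteq> T" "\<sigma> \<in> T" "length \<sigma> = lvl a" "a + d \<le> height"
  shows "card (extensions S \<sigma> (lvl (a + d))) \<le> 2 ^ d"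
proof -
  have "card (extensions S \<sigma> (lvl (a + d))) \<le> card (extensions T \<sigma> (lvl (a + d)))"
    using assms(1) finite_T by (intro card_mono) (auto simp: extensions_def)
  thus ?thesis
    using card_extensions_lvl[OF assms(2-4)] by simp
qed

text \<open>The inequality says that more than a \<open>2^-s\<close> fraction of the \<open>2^(height - a)\<close> leaves
  above \<open>\<sigma>\<close> satisfy \<open>P\<close>.\<close>

definition dense :: "(bool list \<Rightarrow> bool) \<Rightarrow> nat \<Rightarrow> nat \<Rightarrow> bool list \<Rightarrow> bool" where
  "dense P s a \<sigma> \<longleftrightarrow> \<sigma> \<in> T \<and> length \<sigma> = lvl a \<and>
     2 ^ (height - a) < card (extensions {\<tau>\<in>T. P \<tau>} \<sigma> (Max X)) * 2 ^ s"

lemma dense_children: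
  assumes "dense P s a \<sigma>" "a + Suc s \<le> height"
  shows "\<exists>\<rho>1 \<rho>2. \<rho>1 \<noteq> \<rho>2 \<and> prefix \<sigma> \<rho>1 \<and> prefix \<sigma> \<rho>2 \<and>
    dense P (Suc s) (a + Suc s) \<rho>1 \<and> dense P (Suc s) (a + Suc s) \<rho>2"
proof -
  define b where "b = a + Suc s"
  define B where "B = extensions T \<sigma> (lvl b)"
  define M :: nat where "M = 2 ^ (height - b)"
  define leaves where "leaves \<rho> = card (extensions {\<tau>\<in>T. P \<tau>} \<rho> (Max X))" for \<rho>
  have \<sigma>: "\<sigma> \<in> T" "length \<sigma> = lvl a" and dense_\<sigma>: "2 ^ (height - a) < leaves \<sigma> * 2 ^ s"
    using assms(1) by (auto simp: dense_def leaves_def)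
  have finite_B: "finite B"
    unfolding B_def by (rule finite_extensions[OF finite_T])
  have card_B: "card B = 2 ^ Suc s"
    using card_extensions_lvl[OF \<sigma> assms(2)] by (simp add: B_def b_def)
  have "leaves \<rho> \<le> M" if "\<rho> \<in> B" for \<rho>
  proof -
    have "b + (height - b) = height"
      using assms(2) by (simp add: b_def)
    thus ?thesis
      using card_extensions_le[of "{\<tau>\<in>T. P \<tau>}" \<rho> b "height - b"] that
      by (simp add: B_def extensions_def leaves_def M_def Max_eq_lvl)
  qed
  moreover have "leaves \<sigma> = sum leaves B"
    unfolding leaves_def B_def Max_eq_lvl
    using card_extensions_split[OF finite_T tree_T] \<sigma>(2) assms(2) by (simp add: lvl_le_iff b_def)
  moreover have "2 * M < leaves \<sigma>"
  proof -
    have "height - a = Suc (s + (height - b))"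
      using assms(2) by (simp add: b_def)
    hence "2 ^ (height - a) = 2 * M * 2 ^ s"
      by (simp add: M_def power_add)
    thus ?thesis
      using dense_\<sigma> by simp
  qed
  ultimately obtain \<rho>1 \<rho>2 where \<rho>: "\<rho>1 \<in> B" "\<rho>2 \<in> B" "\<rho>1 \<noteq> \<rho>2"
    "M < leaves \<rho>1 * card B" "M < leaves \<rho>2 * card B"
    using two_heavy_elements[OF finite_B, of leaves M] by auto
  have heavy_child: "prefix \<sigma> \<rho> \<and> dense P (Suc s) (a + Suc s) \<rho>"
    if "\<rho> \<in> B" "M < leaves \<rho> * card B" for \<rho>
  proof -
    have "\<rho> \<in> T" "length \<rho> = lvl (a + Suc s)" "prefix \<sigma> \<rho>"
      using that(1) by (auto simp: B_def extensions_def b_def)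
    moreover have "2 ^ (height - (a + Suc s)) < leaves \<rho> * 2 ^ Suc s"
      using that(2) unfolding card_B M_def b_def .
    ultimately show ?thesis
      by (simp add: dense_def leaves_def)
  qed
  show ?thesis
    using heavy_child[OF \<rho>(1,4)] heavy_child[OF \<rho>(2,5)] \<rho>(3) by blast
qed

lemma dense_sparse_subtree:
  assumes "dense P s a \<sigma>" "a + sparse_span s m \<le> height"
  shows "\<exists>S\<subseteq>T. quasistrong (lvl ` sparse_indices a s m) S \<and> \<sigma> \<in> S \<and> (\<forall>\<tau>\<in>S. \<not> \<tau> \<parallel> \<sigma>) \<and>
    (\<forall>\<rho>. is_leaf S \<rho> \<longrightarrow> extensions {\<tau>\<in>T. P \<tau>} \<rho> (Max X) \<noteq> {})"
  using assms
proof (induction m arbitrary: a s \<sigma>)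
  case 0
  have "\<sigma> \<in> T" "length \<sigma> = lvl a" "extensions {\<tau>\<in>T. P \<tau>} \<sigma> (Max X) \<noteq> {}"
    using "0.prems"(1) by (auto simp: dense_def)
  moreover have "set (prefixes \<sigma>) \<subseteq> T"
    using \<open>\<sigma> \<in> T\<close> tree_T by (auto simp: is_tree_def)
  ultimately show ?case
    using quasistrong_prefixes[of \<sigma>] is_leaf_prefixes[of \<sigma>]
    by (intro exI[of _ "set (prefixes \<sigma>)"]) (auto simp: parallel_def)
next
  case (Suc m)
  define b where "b = a + Suc s"
  have span_b: "b + sparse_span (Suc s) m \<le> height"
    using Suc.prems(2) by (simp add: b_def)
  obtain \<rho>1 \<rho>2 where \<rho>: "\<rho>1 \<noteq> \<rho>2" "prefix \<sigma> \<rho>1" "prefix \<sigma> \<rho>2"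
    "dense P (Suc s) b \<rho>1" "dense P (Suc s) b \<rho>2"
    using dense_children[OF Suc.prems(1)] span_b b_def by auto
  obtain S1 where S1: "S1 \<subseteq> T" "quasistrong (lvl ` sparse_indices b (Suc s) m) S1" "\<rho>1 \<in> S1"
    "\<forall>\<tau>\<in>S1. \<not> \<tau> \<parallel> \<rho>1" "\<forall>\<rho>. is_leaf S1 \<rho> \<longrightarrow> extensions {\<tau>\<in>T. P \<tau>} \<rho> (Max X) \<noteq> {}"
    using Suc.IH[OF \<rho>(4) span_b] by blast
  obtain S2 where S2: "S2 \<subseteq> T" "quasistrong (lvl ` sparse_indices b (Suc s) m) S2" "\<rho>2 \<in> S2"
    "\<forall>\<tau>\<in>S2. \<not> \<tau> \<parallel> \<rho>2" "\<forall>\<rho>. is_leaf S2 \<rho> \<longrightarrow> extensions {\<tau>\<in>T. P \<tau>} \<rho> (Max X) \<noteq> {}"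
    using Suc.IH[OF \<rho>(5) span_b] by blast
  have \<sigma>: "\<sigma> \<in> T" "length \<sigma> = lvl a"
    using Suc.prems(1) by (auto simp: dense_def)
  have len_\<rho>: "length \<rho>1 = lvl b" "length \<rho>2 = lvl b"
    using \<rho>(4,5) by (auto simp: dense_def)
  have "lvl a < lvl b"
    using span_b by (simp add: lvl_less_iff b_def)
  hence "strict_prefix \<sigma> \<rho>1"
    using \<rho>(2) \<sigma>(2) len_\<rho> by (auto simp: strict_prefix_def)
  let ?S = "set (prefixes \<sigma>) \<union> (S1 \<union> S2)"
  have "quasistrong (insert (length \<sigma>) (lvl ` sparse_indices b (Suc s) m)) ?S"
    using \<sigma>(2) len_\<rho> \<open>lvl a < lvl b\<close> start_in_sparse_indices sparse_levels_ge[OF span_b]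
    by (intro quasistrong_glue[OF S1(2) S2(2) S1(3) S2(3) S1(4) S2(4) _ _ _ \<rho>(1-3)]) auto
  moreover have "insert (length \<sigma>) (lvl ` sparse_indices b (Suc s) m) = lvl ` sparse_indices a s (Suc m)"
    using \<sigma>(2) by (simp add: b_def)
  ultimately have "quasistrong (lvl ` sparse_indices a s (Suc m)) ?S"
    by simp
  moreover have "?S \<subseteq> T"
    using \<sigma>(1) tree_T S1(1) S2(1) by (auto simp: is_tree_def)
  moreover have "\<forall>\<tau>\<in>?S. \<not> \<tau> \<parallel> \<sigma>"
    using not_parallel_glued[OF S1(4) S2(4) \<rho>(2,3)] by blast
  moreover have "extensions {\<tau>\<in>T. P \<tau>} \<rho> (Max X) \<noteq> {}" if "is_leaf ?S \<rho>" for \<rho>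
    using is_leaf_glued[OF that S1(3) \<open>strict_prefix \<sigma> \<rho>1\<close>] S1(5) S2(5) by blast
  moreover have "\<sigma> \<in> ?S"
    by simp
  ultimately show ?case
    by blast
qed

lemma monochromatic_sparse_subtree:
  assumes "0 < k" "\<forall>\<sigma>\<in>T. length \<sigma> = Max X \<longrightarrow> C \<sigma> < k"
    "sparse_span (floorlog 2 k) m \<le> height"
  shows "\<exists>c<k. \<exists>S\<subseteq>T. quasistrong (lvl ` sparse_indices 0 (floorlog 2 k) m) S \<and>
    (\<forall>\<rho>. is_leaf S \<rho> \<longrightarrow> (\<exists>\<tau>\<in>T. length \<tau> = Max X \<and> prefix \<rho> \<tau> \<and> C \<tau> = c))"
proof -
  obtain \<sigma> where \<sigma>: "\<sigma> \<in> T" "length \<sigma> = lvl 0"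
    using quasistrong_T Min_in[OF finite_X X_nonempty] unfolding quasistrong_def Min_eq_lvl by blast
  define L where "L = extensions T \<sigma> (Max X)"
  have "card L = 2 ^ height"
    using card_extensions_lvl[OF \<sigma>, of height] by (simp add: L_def Max_eq_lvl)
  have "finite L"
    unfolding L_def by (rule finite_extensions[OF finite_T])
  moreover have "\<forall>\<tau>\<in>L. C \<tau> < k"
    using assms(2) by (auto simp: L_def extensions_def)
  ultimately obtain c where "c < k" and popular: "card L \<le> k * card {\<tau>\<in>L. C \<tau> = c}"
    using popular_value assms(1) by blast
  define leaves where "leaves = extensions {\<tau>\<in>T. C \<tau> = c} \<sigma> (Max X)"
  have "leaves = {\<tau>\<in>L. C \<tau> = c}"
    by (auto simp: L_def leaves_def extensions_def)
  hence "2 ^ height \<le> k * card leaves"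
    using popular \<open>card L = 2 ^ height\<close> by simp
  moreover from this have "0 < card leaves"
    by (cases "card leaves") auto
  moreover have "k < 2 ^ floorlog 2 k"
    by (rule floorlog_leD) simp_all
  ultimately have "2 ^ height < card leaves * 2 ^ floorlog 2 k"
    by (metis mult.commute mult_strict_right_mono order_le_less_trans)
  hence "dense (\<lambda>\<tau>. C \<tau> = c) (floorlog 2 k) 0 \<sigma>"
    using \<sigma> by (simp add: dense_def leaves_def)
  moreover have "0 + sparse_span (floorlog 2 k) m \<le> height"
    using assms(3) by simp
  ultimately obtain S where "S \<subseteq> T" "quasistrong (lvl ` sparse_indices 0 (floorlog 2 k) m) S"
    "\<forall>\<rho>. is_leaf S \<rho> \<longrightarrow> extensions {\<tau>\<in>T. C \<tau> = c} \<rho> (Max X) \<noteq> {}"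
    using dense_sparse_subtree[of "\<lambda>\<tau>. C \<tau> = c" "floorlog 2 k" 0 \<sigma> m] by blast
  thus ?thesis
    using \<open>c < k\<close> unfolding extensions_def by blast
qed

end

section \<open>The bound functions\<close>

lemma floorlog_two_pos: "0 < k \<Longrightarrow> 0 < floorlog 2 k"
  using floorlog_eq_zero_iff[of 2 k] by simp

lemma floorlog_two_le: "floorlog 2 k \<le> k"
  by (rule floorlog_leI) (simp_all add: less_exp)

lemma power_int_neg_less_inverse_iff:
  assumes "0 < k"
  shows "power_int (2::rat) (- e) < 1 / of_nat k \<longleftrightarrow> 0 \<le> e \<and> k < 2 ^ nat e"
proof (cases "0 \<le> e")
  case True
  then obtain j where "e = int j"
    using nonneg_eq_int by blast
  hence "power_int (2::rat) (- e) = 1 / 2 ^ j"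
    by (simp add: power_int_minus divide_inverse)
  moreover have "(1::rat) / 2 ^ j < 1 / of_nat k \<longleftrightarrow> (of_nat k :: rat) < 2 ^ j"
    using assms by (simp add: divide_simps)
  ultimately show ?thesis
    using True \<open>e = int j\<close> by (metis nat_int of_nat_less_iff of_nat_numeral of_nat_power)
next
  case False
  hence "1 \<le> power_int (2::rat) (- e)"
    by (simp add: one_le_power_int)
  moreover have "1 / of_nat k \<le> (1::rat)"
    using assms by simp
  ultimately have "\<not> power_int (2::rat) (- e) < 1 / of_nat k"
    by linarith
  thus ?thesis
    using False by simp
qed

lemma eexp_inverse_of_nat: "0 < k \<Longrightarrow> eexp (1 / of_nat k) = int (floorlog 2 k)"
  unfolding eexp_def power_int_neg_less_inverse_iff
proof (rule Least_equality)
  show "0 \<le> int (floorlog 2 k) \<and> k < 2 ^ nat (int (floorlog 2 k))"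
    by (simp add: floorlog_leD)
  show "int (floorlog 2 k) \<le> e" if "0 \<le> e \<and> k < 2 ^ nat e" for e
    using that floorlog_leI[of k 2 "nat e"] by (simp add: le_nat_iff)
qed

lemma gfun_inverse_of_nat:
  assumes "0 < k"
  shows "gfun (int j + 1) (1 / of_nat k) = int (sparse_span (floorlog 2 k) j)"
proof -
  have "2 * gfun (int j + 1) (1 / of_nat k) = 2 * int j * int (floorlog 2 k) + int j * (int j + 1)"
    using assms by (simp add: gfun_def eexp_inverse_of_nat)
  also have "\<dots> = 2 * int (sparse_span (floorlog 2 k) j)"
    using arg_cong[OF double_sparse_span[of "floorlog 2 k" j], of int] by (simp add: algebra_simps)
  finally show ?thesis
    by simp
qed

lemma gbar_ge_two: "0 < k \<Longrightarrow> 2 \<le> gbar x k i"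
proof (induction i)
  case (Suc i)
  define j where "j = nat (gbar x k i) - 1"
  have "gbar x k i = int j + 1" "1 \<le> j"
    using Suc by (auto simp: j_def)
  hence "gbar x k (Suc i) = int (sparse_span (floorlog 2 k) j)"
    using gfun_inverse_of_nat[OF Suc.prems] by simp
  moreover have "sparse_span (floorlog 2 k) 1 \<le> sparse_span (floorlog 2 k) j"
    using \<open>1 \<le> j\<close> by (rule sparse_span_mono)
  ultimately show ?case
    using floorlog_two_pos[OF Suc.prems] by simp
qed simp

lemma gbar_Suc:
  "0 < k \<Longrightarrow> gbar x k (Suc i) = int (sparse_span (floorlog 2 k) (nat (gbar x k i) - 1))"
  using gfun_inverse_of_nat[of k "nat (gbar x k i) - 1"] gbar_ge_two[of k x i] by simp

lemma gbar_le_power: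
  assumes "0 < k" "k \<le> x"
  shows "gbar x k i \<le> int (x + k + i + 1) ^ 2 ^ i"
proof (induction i)
  case (Suc i)
  define B where "B = (x + k + i + 2) ^ 2 ^ i"
  have "gbar x k i \<le> int B"
    using Suc.IH by (rule order_trans) (simp add: B_def power_mono)
  hence "nat (gbar x k i) - 1 \<le> B - 1"
    by linarith
  moreover have "2 * floorlog 2 k \<le> Suc (B - 1)"
  proof -
    have "x + k + i + 2 \<le> B"
      unfolding B_def by (rule self_le_power) simp_all
    thus ?thesis
      using floorlog_two_le[of k] assms(2) by linarith
  qed
  ultimately have "sparse_span (floorlog 2 k) (nat (gbar x k i) - 1) \<le> (Suc (B - 1))\<^sup>2"
    using sparse_span_mono sparse_span_le_square order_trans by blast
  moreover have "(Suc (B - 1))\<^sup>2 = (x + k + Suc i + 1) ^ 2 ^ Suc i"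
    by (simp add: B_def power_mult[symmetric] mult.commute)
  ultimately show ?case
    unfolding gbar_Suc[OF assms(1)] by (metis of_nat_le_iff of_nat_power)
qed simp

lemma sparse_span_fits:
  assumes "0 < k" "gbar x k (Suc i) \<le> int n + 1"
  shows "sparse_span (floorlog 2 k) (nat (gbar x k i) - 2) \<le> n - 1"
proof -
  define e where "e = floorlog 2 k"
  define j where "j = nat (gbar x k i) - 1"
  have "1 \<le> j" "1 \<le> e"
    using gbar_ge_two[OF assms(1), of x i] floorlog_two_pos[OF assms(1)] by (simp_all add: j_def e_def)
  have "sparse_span e (j - 1) + e + j = sparse_span e j"
    using sparse_span_Suc[of e "j - 1"] \<open>1 \<le> j\<close> by simp
  also have "\<dots> \<le> n + 1"
    using assms(2) gbar_Suc[OF assms(1)] by (simp add: j_def e_def)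
  finally have "sparse_span e (j - 1) \<le> n - 1"
    using \<open>1 \<le> j\<close> \<open>1 \<le> e\<close> by linarith
  moreover have "j - 1 = nat (gbar x k i) - 2"
    by (simp add: j_def)
  ultimately show ?thesis
    by (simp add: e_def)
qed

lemma persistent_if_gbar_le:
  assumes "0 < k" "finite X" "X \<noteq> {}" "gbar (Min X) k i \<le> int (card X) + 1"
  shows "persistent k i X"
  using assms(2-4)
proof (induction i arbitrary: X)
  case 0
  thus ?case
    using assms(1) by (simp add: omega_large_def)
next
  case (Suc i)
  interpret finite_levels X
    using Suc.prems(1,2) by unfold_locales
  define m where "m = nat (gbar (Min X) k i) - 2"
  define Y where "Y = lvl ` sparse_indices 0 (floorlog 2 k) m"
  have span: "0 + sparse_span (floorlog 2 k) m \<le> height"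
    using sparse_span_fits[OF assms(1) Suc.prems(3)] by (simp add: m_def)
  have "Y \<subseteq> X"
    unfolding Y_def using span by (rule sparse_levels_subset)
  have "card Y = Suc m"
    unfolding Y_def using span by (rule card_sparse_levels)
  have "Min Y = Min X"
    unfolding Min_eq_lvl Y_def
    using finite_sparse_indices start_in_sparse_indices sparse_levels_ge[OF span]
    by (intro Min_eqI) auto
  have "persistent k i Y"
  proof (rule Suc.IH)
    show "finite Y" "Y \<noteq> {}"
      using \<open>card Y = Suc m\<close> card_gt_0_iff by fastforce+
    show "gbar (Min Y) k i \<le> int (card Y) + 1"
      using \<open>Min Y = Min X\<close> \<open>card Y = Suc m\<close> gbar_ge_two[OF assms(1), of "Min X" i]
      by (simp add: m_def)
  qed
  moreover have "\<exists>c<k. \<exists>S\<subseteq>T. quasistrong Y S \<and>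
      (\<forall>\<rho>. is_leaf S \<rho> \<longrightarrow> (\<exists>\<tau>\<in>T. length \<tau> = Max X \<and> prefix \<rho> \<tau> \<and> C \<tau> = c))"
    if "quasistrong X T" "\<forall>\<sigma>\<in>T. length \<sigma> = Max X \<longrightarrow> C \<sigma> < k" for T C
  proof -
    interpret quasistrong_tree X T
      using that(1) by unfold_locales
    show ?thesis
      using monochromatic_sparse_subtree[OF assms(1) that(2)] span unfolding Y_def by simp
  qed
  ultimately show ?case
    using Suc.prems(1,2) \<open>Y \<subseteq> X\<close> by (simp only: persistent.simps) blast
qed

theorem lemma2p7:
  fixes i :: nat
  shows "(\<forall>x k. 0 < k \<and> k \<le> x \<longrightarrow> gbar x k i \<le> int (x + k + i + 1) ^ (2 ^ i)) \<and>
         (\<forall>k X. 1 \<le> k \<longrightarrow> finite X \<longrightarrow> X \<noteq> {} \<longrightarrow> int (card X) > gbar (Min X) k i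
             \<longrightarrow> persistent k i X)"
proof (intro conjI allI impI)
  show "gbar x k i \<le> int (x + k + i + 1) ^ 2 ^ i" if "0 < k \<and> k \<le> x" for x k
    using that gbar_le_power by blast
  show "persistent k i X"
    if "1 \<le> k" "finite X" "X \<noteq> {}" "int (card X) > gbar (Min X) k i" for k X
    using that by (intro persistent_if_gbar_le) auto
qed

end
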